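(* Let $(X,Y)\sim P_{XY}$ be a pair of random variables on finite alphabets $\mathcal{X}\times\mathcal{Y}$, and let $\varepsilon,\varepsilon_0,\varepsilon_1,\varepsilon_2,\varepsilon_3>0$ with $\varepsilon_0+\varepsilon_1+\varepsilon_2+\varepsilon_3\le\varepsilon$. (Lower bounds.) For every distributed encoding protocol $(e_{\mathcal X},e_{\mathcal Y},U)\in\Lambda_\varepsilon$ with codomains $\mathcal{C}_{\mathcal X},\mathcal{C}_{\mathcal Y}$, $$\log|\mathcal C_{\mathcal X}|\ge H_0^{\varepsilon}(X|Y),\qquad \log|\mathcal C_{\mathcal Y}|\ge H_0^{\varepsilon}(Y|X),\qquad \log|\mathcal C_{\mathcal X}|+\log|\mathcal C_{\mathcal Y}|\ge H_0^{\varepsilon}(X,Y).$$ (Achievability.) Let $\delta\ge 0$ be such that $\Pr\{(X,Y)\notin\mathcal{A}_\delta(P_{XY})\}\le\varepsilon_0$. Then for any finite sets $\mathcal C_{\mathcal X},\mathcal C_{\mathcal Y}$ satisfying $$\log|\mathcal C_{\mathcal X}|\ge \Xi^\delta_{\max}(P_{XY})-\Xi^\delta_{\min}(P_Y)-\log\varepsilon_1,$$ $$\log|\mathcal C_{\mathcal Y}|\ge \Xi^\delta_{\max}(P_{XY})-\Xi^\delta_{\min}(P_X)-\log\varepsilon_2,$$ $$\log|\mathcal C_{\mathcal X}|+\log|\mathcal C_{\mathcal Y}|\ge \Xi^\delta_{\max}(P_{XY})-\log\varepsilon_3,$$ there exists a distributed encoding protocol $(e_{\mathcal X},e_{\mathcal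 Y},U)\in\Lambda_\varepsilon$ with these codomains.
   Context: All logarithms are base 2; all random variables are discrete on finite alphabets. For a random variable $W$ on a finite alphabet $\mathcal W$, $H(W)$ is the Shannon entropy. Smooth entropies: for $\varepsilon\ge0$ and jointly distributed $(X,Y)$, the infima/suprema below range over pairs $(\bar X,\bar Y)$ defined on a common probability space with $(X,Y)$ such that $\Pr[(\bar X,\bar Y)\neq(X,Y)]\le\varepsilon$. $H_0^\varepsilon(X|Y):=\log\big[\inf_{(\bar X,\bar Y)}\max_{y}|\{x:P_{\bar X|\bar Y=y}(x)>0\}|\big]$; the unconditional versions are obtained with $Y$ trivial (constant). In particular $H_0^\varepsilon(X,Y)$ is $H_0^\varepsilon$ of the pair $W=(X,Y)$. $H_\infty^\delta(W):=-\log\big[\inf_{\bar W:\Pr[\bar W\neq W]\le\delta}\max_w P_{\bar W}(w)\big]$. $H_{-\infty}^\delta(W):=-\log\big[\sup_{\bar W:\Pr[\bar W\neq W]\le\delta}\min_{w:P_{\bar W}(w)>0}P_{\bar W}(w)\big]$. For a random variable $W$ on finite alphabet $\mathcal W$ and $\delta\ge0$: $\Xi^\delta_{\min}(P_W):=H(W)-|H(W)-H^\delta_\infty(W)|-\delta\log|\mathcal W|$ and $\Xi^\delta_{\max}(P_W):=H(W)+|H(W)-H^\delta_{-\infty}(W)|+\delta\log|\mathcal W|$ (for $W=(X,Y)$, $\mathcal W=\mathcal X\times\mathcal Y$). $\mathcal A_\delta(P_X):=\{x:\Xi^\delta_{\min}(P_X)\le-\log P_X(x)\le\Xi^\delta_{\max}(P_X)\}$,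 similarly $\mathcal A_\delta(P_Y)$, and $\mathcal A_\delta(P_{XY}):=\{(x,y):\Xi^\delta_{\min}(P_{XY})\le-\log P_{XY}(x,y)\le\Xi^\delta_{\max}(P_{XY}),\ x\in\mathcal A_\delta(P_X),\ y\in\mathcal A_\delta(P_Y)\}$. Distributed encoding protocols: for $0\le\varepsilon\le1$, $\Lambda_\varepsilon=\Lambda^P_\varepsilon(\mathcal X\times\mathcal Y\to\mathcal C_{\mathcal X}\times\mathcal C_{\mathcal Y})$ is the set of triples $(e_{\mathcal X},e_{\mathcal Y},U)$ where $U$ is a random variable with finite range $\mathcal U$, independent of $(X,Y)$ (shared randomness), $e_{\mathcal X}:\mathcal X\times\mathcal U\to\mathcal C_{\mathcal X}$, $e_{\mathcal Y}:\mathcal Y\times\mathcal U\to\mathcal C_{\mathcal Y}$, such that there exists a decoding function $g:\mathcal C_{\mathcal X}\times\mathcal C_{\mathcal Y}\times\mathcal U\to\mathcal X\times\mathcal Y$ with $\Pr\{g(e_{\mathcal X}(X,U),e_{\mathcal Y}(Y,U),U)\neq(X,Y)\}\le\varepsilon$. The encoding lengths are $\log|\mathcal C_{\mathcal X}|$ and $\log|\mathcal C_{\mathcal Y}|$. *)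

theory Defs
  imports "HOL-Probability.Probability"
begin

definition shannon_H :: "'w::finite pmf \<Rightarrow> real" where
  "shannon_H p = - (\<Sum>w\<in>UNIV. pmf p w * log 2 (pmf p w))"

text \<open>Couplings (W, W') of W ~ p with some W' on the same alphabet such that Pr[W' \<noteq> W] \<le> eps.
  The first component is the original W, the second the smoothed variable.\<close>
definition smooth_couplings :: "'w pmf \<Rightarrow> real \<Rightarrow> ('w \<times> 'w) pmf set" where
  "smooth_couplings p eps =
     {Q. map_pmf fst Q = p \<and> measure_pmf.prob Q {z. fst z \<noteq> snd z} \<le> eps}"

definition H0_smooth :: "'w::finite pmf \<Rightarrow> real \<Rightarrow> real" where
  "H0_smooth p eps =
     log 2 (real (INF Q\<in>smooth_couplings p eps. card (set_pmf (map_pmf snd Q))))"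

definition H0_cond_smooth :: "('a::finite \<times> 'b::finite) pmf \<Rightarrow> real \<Rightarrow> real" where
  "H0_cond_smooth p eps =
     log 2 (real (INF Q\<in>smooth_couplings p eps.
        Max ((\<lambda>y. card {x. pmf (map_pmf snd Q) (x, y) > 0}) ` UNIV)))"

definition Hinf_smooth :: "'w::finite pmf \<Rightarrow> real \<Rightarrow> real" where
  "Hinf_smooth p d =
     - log 2 (INF Q\<in>smooth_couplings p d. Max ((\<lambda>w. pmf (map_pmf snd Q) w) ` UNIV))"

definition Hneginf_smooth :: "'w::finite pmf \<Rightarrow> real \<Rightarrow> real" where
  "Hneginf_smooth p d =
     - log 2 (SUP Q\<in>smooth_couplings p d.
        Min {pmf (map_pmf snd Q) w | w. pmf (map_pmf snd Q) w > 0})"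

definition Xi_min :: "'w::finite pmf \<Rightarrow> real \<Rightarrow> real" where
  "Xi_min p d = shannon_H p - \<bar>shannon_H p - Hinf_smooth p d\<bar>
                - d * log 2 (real (card (UNIV :: 'w set)))"

definition Xi_max :: "'w::finite pmf \<Rightarrow> real \<Rightarrow> real" where
  "Xi_max p d = shannon_H p + \<bar>shannon_H p - Hneginf_smooth p d\<bar>
                + d * log 2 (real (card (UNIV :: 'w set)))"

text \<open>Typical set A_\<delta>(P_W). Symbols with probability 0 have -log P = +\<infinity> and are
  excluded explicitly (Isabelle's log 2 0 = 0 would otherwise misrepresent this).\<close>
definition typ_set :: "'w::finite pmf \<Rightarrow> real \<Rightarrow> 'w set" where
  "typ_set p d = {w. pmf p w > 0 \<and> Xi_min p d \<le> - log 2 (pmf p w)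
                       \<and> - log 2 (pmf p w) \<le> Xi_max p d}"

definition typ_set_joint :: "('x::finite \<times> 'y::finite) pmf \<Rightarrow> real \<Rightarrow> ('x \<times> 'y) set" where
  "typ_set_joint P d = {(x, y). (x, y) \<in> typ_set P d
        \<and> x \<in> typ_set (map_pmf fst P) d \<and> y \<in> typ_set (map_pmf snd P) d}"

text \<open>The shared randomness U has finite range,
  modelled as a distribution on nat with finite support; independence of U from (X,Y) is
  modelled by the product distribution.\<close>
definition in_Lambda ::
  "('x \<times> 'y) pmf \<Rightarrow> real \<Rightarrow> ('x \<Rightarrow> nat \<Rightarrow> 'cx) \<Rightarrow> ('y \<Rightarrow> nat \<Rightarrow> 'cy) \<Rightarrow> nat pmf \<Rightarrow> bool" where
  "in_Lambda P eps eX eY U \<longleftrightarrow> finite (set_pmf U) \<and>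
     (\<exists>g :: 'cx \<Rightarrow> 'cy \<Rightarrow> nat \<Rightarrow> 'x \<times> 'y.
        measure_pmf.prob (pair_pmf P U)
          {((x, y), u). g (eX x u) (eY y u) u \<noteq> (x, y)} \<le> eps)"

end

theory Submission
  imports Defs
begin

text \<open>
  Converse: a protocol with shared randomness is an average of deterministic codes, so
  one of them already has error at most eps (derandomization).  A deterministic code
  (fX, fY, g) reconstructs (X, Y) with error at most eps; feeding the decoder output,
  or parts of it, into the definitions of the smooth max-entropies as the smoothed
  variable bounds H_0^eps(X|Y), H_0^eps(Y|X) and H_0^eps(X,Y) by the number of
  possible codewords.

  Achievability: random binning with the decoder that returns a jointly typical pair in
  the received bin.  On the typical set the probabilities are at least 2^-Xi_max, which
  bounds the number of typical pairs sharing a y, sharing an x, or in total; a union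
  bound then shows that the average error over all binning functions is at most
  eps0 + eps1 + eps2 + eps3, so a good deterministic binning exists.
\<close>

lemma exists_le_weighted_average:
  fixes w f :: "'a \<Rightarrow> real"
  assumes "finite S" "S \<noteq> {}" "\<And>u. u \<in> S \<Longrightarrow> w u > 0"
    and "(\<Sum>u\<in>S. w u * f u) \<le> c * (\<Sum>u\<in>S. w u)"
  shows "\<exists>u\<in>S. f u \<le> c"
proof (rule ccontr)
  assume "\<not> (\<exists>u\<in>S. f u \<le> c)"
  then have "\<And>u. u \<in> S \<Longrightarrow> w u * c < w u * f u"
    using assms(3) by (auto simp: not_le)
  then have "(\<Sum>u\<in>S. w u * c) < (\<Sum>u\<in>S. w u * f u)"
    using assms(1,2) by (intro sum_strict_mono) auto
  moreover have "(\<Sum>u\<in>S. w u * c) = c * (\<Sum>u\<in>S. w u)"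
    by (simp add: sum_distrib_left mult.commute)
  ultimately show False
    using assms(4) by linarith
qed

lemma measure_pair_pmf_sections:
  fixes P :: "'a pmf" and U :: "'b pmf"
  assumes fin: "finite (set_pmf U)"
  shows "measure_pmf.prob (pair_pmf P U) E =
           (\<Sum>u\<in>set_pmf U. pmf U u * measure_pmf.prob P {a. (a, u) \<in> E})"
proof -
  have pair_as_bind: "pair_pmf P U = bind_pmf U (\<lambda>u. map_pmf (\<lambda>a. (a, u)) P)"
    by (subst pair_commute_pmf) (simp add: pair_pmf_def map_pmf_def bind_assoc_pmf bind_return_pmf)
  have "measure_pmf.prob (pair_pmf P U) E =
      measure_pmf.expectation U (\<lambda>u. measure_pmf.prob (map_pmf (\<lambda>a. (a, u)) P) E)"
    unfolding pair_as_bind measure_pmf_bind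
    by (rule measure_pmf.measure_bind[where N="count_space UNIV"])
       (auto simp: space_subprob_algebra intro: prob_space_imp_subprob_space prob_space_measure_pmf)
  also have "\<dots> = (\<Sum>u\<in>set_pmf U. pmf U u * measure_pmf.prob P {a. (a, u) \<in> E})"
    using fin by (subst integral_measure_pmf[of "set_pmf U"]) (auto simp: vimage_def)
  finally show ?thesis .
qed

lemma prob_as_sum:
  fixes P :: "'a::finite pmf"
  shows "measure_pmf.prob P A = (\<Sum>w\<in>UNIV. pmf P w * of_bool (w \<in> A))"
  by (simp add: measure_measure_pmf_finite)

text \<open>Monotonicity of log 2 on naturals; the case n = 0 is covered by the
  convention log 2 0 = 0.\<close>

lemma log_mono_nat: "n \<le> m \<Longrightarrow> 0 < m \<Longrightarrow> log 2 (real n) \<le> log 2 (real m)"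
  by (cases "n = 0") (auto simp: log_def intro!: divide_right_mono)

lemma INF_nat_le: "Q0 \<in> S \<Longrightarrow> (INF Q\<in>S. (f Q :: nat)) \<le> f Q0"
  by (rule cINF_lower) (auto intro: bdd_belowI[of _ 0])

definition decoding_error ::
  "('x \<times> 'y) pmf \<Rightarrow> ('x \<Rightarrow> 'cx) \<Rightarrow> ('y \<Rightarrow> 'cy) \<Rightarrow> ('cx \<Rightarrow> 'cy \<Rightarrow> 'x \<times> 'y) \<Rightarrow> real" where
  "decoding_error P fX fY g = measure_pmf.prob P {(x, y). g (fX x) (fY y) \<noteq> (x, y)}"

lemma in_Lambda_deterministic_code:
  assumes "in_Lambda P eps eX eY U"
  shows "\<exists>u g. decoding_error P (\<lambda>x. eX x u) (\<lambda>y. eY y u) g \<le> eps"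
proof -
  from assms obtain g where fin: "finite (set_pmf U)"
    and err: "measure_pmf.prob (pair_pmf P U)
                {((x, y), u). g (eX x u) (eY y u) u \<noteq> (x, y)} \<le> eps"
    unfolding in_Lambda_def by blast
  define err_u where "err_u u = decoding_error P (\<lambda>x. eX x u) (\<lambda>y. eY y u) (\<lambda>a b. g a b u)" for u
  have "(\<Sum>u\<in>set_pmf U. pmf U u * err_u u) =
      measure_pmf.prob (pair_pmf P U) {((x, y), u). g (eX x u) (eY y u) u \<noteq> (x, y)}"
    unfolding err_u_def decoding_error_def measure_pair_pmf_sections[OF fin]
    by (auto intro!: sum.cong arg_cong[where f="measure_pmf.prob P"])
  also have "\<dots> \<le> eps * (\<Sum>u\<in>set_pmf U. pmf U u)"
    using err by (simp add: sum_pmf_eq_1[OF fin])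
  finally have "\<exists>u\<in>set_pmf U. err_u u \<le> eps"
    by (intro exists_le_weighted_average[OF fin set_pmf_not_empty]) (auto simp: pmf_positive)
  then show ?thesis unfolding err_u_def by blast
qed

lemma deterministic_code_in_Lambda:
  assumes "decoding_error P fX fY g \<le> eps"
  shows "in_Lambda P eps (\<lambda>x u. fX x) (\<lambda>y u. fY y) (return_pmf 0)"
  unfolding in_Lambda_def
proof (intro conjI exI[of _ "\<lambda>a b u. g a b"])
  show "finite (set_pmf (return_pmf (0::nat)))"
    by simp
  show "measure_pmf.prob (pair_pmf P (return_pmf (0 :: nat))) {((x, y), u). g (fX x) (fY y) \<noteq> (x, y)} \<le> eps"
  proof -
    let ?E = "{((x, y), u :: nat). g (fX x) (fY y) \<noteq> (x, y)}"
    have "measure_pmf.prob (pair_pmf P (return_pmf 0)) ?E = measure_pmf.prob P {w. (w, 0) \<in> ?E}"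
      by (subst measure_pair_pmf_sections) simp_all
    also have "\<dots> = measure_pmf.prob P {(x, y). g (fX x) (fY y) \<noteq> (x, y)}"
      by (rule arg_cong[where f="measure_pmf.prob P"]) auto
    also have "\<dots> \<le> eps"
      using assms unfolding decoding_error_def .
    finally show ?thesis .
  qed
qed

lemma reconstruction_coupling:
  assumes "measure_pmf.prob P {w. r w \<noteq> w} \<le> eps"
  shows "map_pmf (\<lambda>w. (w, r w)) P \<in> smooth_couplings P eps"
  using assms by (simp add: smooth_couplings_def pmf.map_comp o_def vimage_def eq_commute)

lemma H0_smooth_le_reconstruction:
  fixes P :: "'w::finite pmf"
  assumes "measure_pmf.prob P {w. r w \<noteq> w} \<le> eps"
    and "card (set_pmf (map_pmf r P)) \<le> k" and "0 < k"
  shows "H0_smooth P eps \<le> log 2 (real k)"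
proof -
  let ?Q = "map_pmf (\<lambda>w. (w, r w)) P"
  have coupling: "?Q \<in> smooth_couplings P eps"
    using assms(1) by (rule reconstruction_coupling)
  have "map_pmf snd ?Q = map_pmf r P"
    by (simp add: pmf.map_comp o_def)
  then have "(INF Q\<in>smooth_couplings P eps. card (set_pmf (map_pmf snd Q))) \<le> k"
    using INF_nat_le[OF coupling, of "\<lambda>Q. card (set_pmf (map_pmf snd Q))"] assms(2) by simp
  then show ?thesis
    unfolding H0_smooth_def using assms(3) by (rule log_mono_nat)
qed

lemma H0_cond_smooth_le_reconstruction:
  fixes P :: "('x::finite \<times> 'y::finite) pmf"
  assumes "measure_pmf.prob P {w. r w \<noteq> w} \<le> eps"
    and "\<And>y. card {x. (x, y) \<in> set_pmf (map_pmf r P)} \<le> k" and "0 < k"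
  shows "H0_cond_smooth P eps \<le> log 2 (real k)"
proof -
  let ?Q = "map_pmf (\<lambda>w. (w, r w)) P"
  let ?width = "\<lambda>Q. Max ((\<lambda>y. card {x. pmf (map_pmf snd Q) (x, y) > 0}) ` UNIV)"
  have coupling: "?Q \<in> smooth_couplings P eps"
    using assms(1) by (rule reconstruction_coupling)
  have "map_pmf snd ?Q = map_pmf r P"
    by (simp add: pmf.map_comp o_def)
  then have "?width ?Q \<le> k"
    using assms(2) by (simp add: pmf_positive_iff)
  with INF_nat_le[OF coupling, of ?width]
  have "(INF Q\<in>smooth_couplings P eps. ?width Q) \<le> k"
    by (rule le_trans)
  then show ?thesis
    unfolding H0_cond_smooth_def using assms(3) by (rule log_mono_nat)
qed

text \<open>Converse for the X-encoder: replacing X by the decoded x-component (keeping Y)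
  reconstructs (X,Y) with error at most eps, and given Y = y the decoded x ranges
  over at most |C_X| values.\<close>

lemma converse_conditional:
  fixes P :: "('x::finite \<times> 'y::finite) pmf" and fX :: "'x \<Rightarrow> 'cx::finite"
  assumes "decoding_error P fX fY g \<le> eps"
  shows "H0_cond_smooth P eps \<le> log 2 (real CARD('cx))"
proof (rule H0_cond_smooth_le_reconstruction)
  define r where "r = (\<lambda>(x, y). (fst (g (fX x) (fY y)), y))"
  have "measure_pmf.prob P {w. r w \<noteq> w} \<le> decoding_error P fX fY g"
    unfolding decoding_error_def r_def
    by (intro measure_pmf.finite_measure_mono) (auto simp: prod_eq_iff)
  then show "measure_pmf.prob P {w. r w \<noteq> w} \<le> eps"
    using assms by linarith
  show "card {x. (x, y) \<in> set_pmf (map_pmf r P)} \<le> CARD('cx)" for y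
  proof -
    have "{x. (x, y) \<in> set_pmf (map_pmf r P)} \<subseteq> range (\<lambda>c. fst (g c (fY y)))"
      unfolding r_def by auto
    then show ?thesis
      by (meson card_image_le card_mono finite le_trans)
  qed
qed simp

lemma converse_conditional_swap:
  fixes P :: "('x::finite \<times> 'y::finite) pmf" and fY :: "'y \<Rightarrow> 'cy::finite"
  assumes "decoding_error P fX fY g \<le> eps"
  shows "H0_cond_smooth (map_pmf prod.swap P) eps \<le> log 2 (real CARD('cy))"
proof (rule converse_conditional)
  have "decoding_error (map_pmf prod.swap P) fY fX (\<lambda>b a. prod.swap (g a b))
      = decoding_error P fX fY g"
    unfolding decoding_error_def
    by (auto intro!: arg_cong[where f="measure_pmf.prob P"] simp: prod_eq_iff)
  then show "decoding_error (map_pmf prod.swap P) fY fX (\<lambda>b a. prod.swap (g a b)) \<le> eps"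
    using assms by simp
qed

text \<open>Converse for the sum rate: the decoder output g(fX X, fY Y) takes at most
  |C_X| * |C_Y| values.\<close>

lemma converse_joint:
  fixes P :: "('x::finite \<times> 'y::finite) pmf"
    and fX :: "'x \<Rightarrow> 'cx::finite" and fY :: "'y \<Rightarrow> 'cy::finite"
  assumes "decoding_error P fX fY g \<le> eps"
  shows "H0_smooth P eps \<le> log 2 (real CARD('cx)) + log 2 (real CARD('cy))"
proof -
  define r where "r = (\<lambda>(x, y). g (fX x) (fY y))"
  have "{w. r w \<noteq> w} = {(x, y). g (fX x) (fY y) \<noteq> (x, y)}"
    unfolding r_def by auto
  then have "measure_pmf.prob P {w. r w \<noteq> w} \<le> eps"
    using assms unfolding decoding_error_def by simp
  moreover have "card (set_pmf (map_pmf r P)) \<le> CARD('cx \<times> 'cy)"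
  proof -
    have "set_pmf (map_pmf r P) \<subseteq> range (case_prod g)"
      unfolding r_def by (auto intro!: image_eqI[where x="(fX _, fY _)"])
    then show ?thesis
      by (meson card_image_le card_mono finite le_trans)
  qed
  ultimately have "H0_smooth P eps \<le> log 2 (real CARD('cx \<times> 'cy))"
    by (rule H0_smooth_le_reconstruction) simp
  then show ?thesis
    by (simp add: log_mult)
qed

lemma typical_pmf_lower:
  assumes "w \<in> typ_set p d"
  shows "2 powr (- Xi_max p d) \<le> pmf p w"
proof -
  from assms have pos: "pmf p w > 0" and le: "- log 2 (pmf p w) \<le> Xi_max p d"
    by (auto simp: typ_set_def)
  have "2 powr (- Xi_max p d) \<le> 2 powr (log 2 (pmf p w))"
    using le by simp
  also have "\<dots> = pmf p w"
    using pos by simp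
  finally show ?thesis .
qed

lemma typical_pmf_upper:
  assumes "w \<in> typ_set p d"
  shows "pmf p w \<le> 2 powr (- Xi_min p d)"
proof -
  from assms have pos: "pmf p w > 0" and le: "Xi_min p d \<le> - log 2 (pmf p w)"
    by (auto simp: typ_set_def)
  have "pmf p w = 2 powr (log 2 (pmf p w))"
    using pos by simp
  also have "\<dots> \<le> 2 powr (- Xi_min p d)"
    using le by simp
  finally show ?thesis .
qed

lemma card_le_of_pmf_lower_bound:
  assumes "finite A" "\<And>w. w \<in> A \<Longrightarrow> 2 powr (- M) \<le> pmf P w"
  shows "real (card A) \<le> measure_pmf.prob P A * 2 powr M"
proof -
  have "real (card A) * 2 powr (- M) \<le> (\<Sum>w\<in>A. pmf P w)"
    using sum_mono[of A "\<lambda>_. 2 powr (- M)" "pmf P"] assms(2) by simp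
  also have "\<dots> = measure_pmf.prob P A"
    using assms(1) by (simp add: measure_measure_pmf_finite)
  finally show ?thesis
    by (simp add: powr_minus_divide pos_divide_le_eq)
qed

text \<open>The jointly typical points above a typical marginal value v are at most
  2^(M - Xi_min) many, as their total probability is at most P_V(v).\<close>

lemma card_typical_fibre:
  fixes P :: "'w::finite pmf" and \<pi> :: "'w \<Rightarrow> 'v::finite"
  assumes lower: "\<And>w. w \<in> T \<Longrightarrow> 2 powr (- M) \<le> pmf P w"
    and typical: "\<And>w. w \<in> T \<Longrightarrow> \<pi> w \<in> typ_set (map_pmf \<pi> P) d"
  shows "real (card {w\<in>T. \<pi> w = v}) \<le> 2 powr (M - Xi_min (map_pmf \<pi> P) d)"
proof (cases "v \<in> typ_set (map_pmf \<pi> P) d")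
  case False
  then have "card {w\<in>T. \<pi> w = v} = 0"
    using typical by (metis (mono_tags, lifting) card.empty empty_Collect_eq)
  then show ?thesis by (metis of_nat_0 powr_ge_zero)
next
  case True
  have "real (card {w\<in>T. \<pi> w = v}) \<le> measure_pmf.prob P {w\<in>T. \<pi> w = v} * 2 powr M"
    using lower by (intro card_le_of_pmf_lower_bound) auto
  also have "\<dots> \<le> measure_pmf.prob P (\<pi> -` {v}) * 2 powr M"
    by (intro mult_right_mono measure_pmf.finite_measure_mono) auto
  also have "\<dots> = pmf (map_pmf \<pi> P) v * 2 powr M"
    by (simp add: pmf_map)
  also have "\<dots> \<le> 2 powr (- Xi_min (map_pmf \<pi> P) d) * 2 powr M"
    using True by (intro mult_right_mono typical_pmf_upper) auto
  finally show ?thesis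
    by (simp add: powr_add[symmetric])
qed

lemma powr_le_of_log_ge:
  assumes "K - log 2 e \<le> log 2 n" "0 < e" "0 < n"
  shows "2 powr K \<le> e * n"
proof -
  have "K \<le> log 2 (e * n)"
    using assms by (simp add: log_mult)
  then have "2 powr K \<le> 2 powr (log 2 (e * n))"
    by simp
  also have "\<dots> = e * n"
    using assms by simp
  finally show ?thesis .
qed

lemma card_agreeing_functions:
  fixes a b :: "'a::finite"
  shows "real (card {f :: 'a \<Rightarrow> 'c::finite. f a = f b})
           = real CARD('a \<Rightarrow> 'c) * (if a = b then 1 else 1 / real CARD('c))"
proof (cases "a = b")
  case False
  have "bij_betw (\<lambda>(f, c). f(b := c)) ({f :: 'a \<Rightarrow> 'c. f a = f b} \<times> UNIV) UNIV"
  proof (rule bij_betw_byWitness[where f'="\<lambda>g. (g(b := g a), g b)"])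
    show "\<forall>w\<in>{f :: 'a \<Rightarrow> 'c. f a = f b} \<times> UNIV. (\<lambda>g. (g(b := g a), g b)) ((\<lambda>(f, c). f(b := c)) w) = w"
      using False by (auto simp: fun_eq_iff)
    show "(\<lambda>g. (g(b := g a), g b)) ` UNIV \<subseteq> {f. f a = f b} \<times> UNIV"
      using False by auto
  qed auto
  then have "card ({f :: 'a \<Rightarrow> 'c. f a = f b} \<times> (UNIV :: 'c set)) = CARD('a \<Rightarrow> 'c)"
    by (rule bij_betw_same_card)
  then have "real (card {f :: 'a \<Rightarrow> 'c. f a = f b}) * real CARD('c) = real CARD('a \<Rightarrow> 'c)"
    by (simp add: card_cartesian_product flip: of_nat_mult)
  then show ?thesis
    using False by (simp add: field_simps)
qed simp

lemma card_colliding_codes: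
  fixes x x' :: "'x::finite" and y y' :: "'y::finite"
  assumes "(x', y') \<noteq> (x, y)"
  shows "real (card {(fX :: 'x \<Rightarrow> 'cx::finite, fY :: 'y \<Rightarrow> 'cy::finite). fX x' = fX x \<and> fY y' = fY y})
    \<le> real CARD(('x \<Rightarrow> 'cx) \<times> ('y \<Rightarrow> 'cy))
       * (of_bool (y' = y) / CARD('cx) + of_bool (x' = x) / CARD('cy) + 1 / (real CARD('cx) * real CARD('cy)))"
proof -
  let ?qX = "if x' = x then 1 else 1 / real CARD('cx)"
  let ?qY = "if y' = y then 1 else 1 / real CARD('cy)"
  have "{(fX :: 'x \<Rightarrow> 'cx, fY :: 'y \<Rightarrow> 'cy). fX x' = fX x \<and> fY y' = fY y}
      = {fX. fX x' = fX x} \<times> {fY. fY y' = fY y}"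
    by auto
  moreover have "real CARD(('x \<Rightarrow> 'cx) \<times> ('y \<Rightarrow> 'cy)) = real CARD('x \<Rightarrow> 'cx) * real CARD('y \<Rightarrow> 'cy)"
    by (metis UNIV_Times_UNIV card_cartesian_product of_nat_mult)
  ultimately have "real (card {(fX :: 'x \<Rightarrow> 'cx, fY :: 'y \<Rightarrow> 'cy). fX x' = fX x \<and> fY y' = fY y})
      = real CARD(('x \<Rightarrow> 'cx) \<times> ('y \<Rightarrow> 'cy)) * (?qX * ?qY)"
    by (simp only: card_cartesian_product of_nat_mult card_agreeing_functions mult_ac)
  also have "?qX * ?qY \<le> of_bool (y' = y) / CARD('cx) + of_bool (x' = x) / CARD('cy)
                          + 1 / (real CARD('cx) * real CARD('cy))"
    using assms by (cases "x' = x"; cases "y' = y") simp_all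
  finally show ?thesis
    by (simp add: mult_left_mono)
qed

definition bin_decoder ::
  "('x \<times> 'y) set \<Rightarrow> ('x \<Rightarrow> 'cx) \<Rightarrow> ('y \<Rightarrow> 'cy) \<Rightarrow> 'cx \<Rightarrow> 'cy \<Rightarrow> 'x \<times> 'y" where
  "bin_decoder T fX fY a b = (SOME w. w \<in> T \<and> fX (fst w) = a \<and> fY (snd w) = b)"

lemma bin_decoder_failure:
  assumes "bin_decoder T fX fY (fX x) (fY y) \<noteq> (x, y)"
  shows "(x, y) \<notin> T \<or> (\<exists>w\<in>T - {(x, y)}. fX (fst w) = fX x \<and> fY (snd w) = fY y)"
proof (rule ccontr)
  assume "\<not> ?thesis"
  then have "bin_decoder T fX fY (fX x) (fY y) = (x, y)"
    unfolding bin_decoder_def by (intro some_equality) auto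
  with assms show False by contradiction
qed

lemma sum_collision_weights:
  fixes T :: "('x \<times> 'y) set" and Ex Ey :: real
  assumes "finite T" "0 < Ex" "0 < Ey"
    and same_y: "real (card {w\<in>T. snd w = y}) \<le> e1 * Ex"
    and same_x: "real (card {w\<in>T. fst w = x}) \<le> e2 * Ey"
    and card_T: "real (card T) \<le> e3 * (Ex * Ey)"
  shows "(\<Sum>w\<in>T. of_bool (snd w = y) / Ex + of_bool (fst w = x) / Ey + 1 / (Ex * Ey)) \<le> e1 + e2 + e3"
proof -
  have "(\<Sum>w\<in>T. of_bool (snd w = y) / Ex + of_bool (fst w = x) / Ey + 1 / (Ex * Ey))
      = real (card {w\<in>T. snd w = y}) / Ex + real (card {w\<in>T. fst w = x}) / Ey + real (card T) / (Ex * Ey)"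
    using assms(1) by (simp add: sum.distrib sum_divide_distrib[symmetric] Int_def conj_commute)
  also have "\<dots> \<le> e1 + e2 + e3"
    using same_y same_x card_T assms(2,3)
    by (intro add_mono) (simp_all add: divide_le_eq)
  finally show ?thesis .
qed

lemma card_failing_codes_union_bound:
  fixes T :: "('x::finite \<times> 'y::finite) set"
  assumes "(x, y) \<in> T"
  shows "card {(fX :: 'x \<Rightarrow> 'cx::finite, fY :: 'y \<Rightarrow> 'cy::finite). bin_decoder T fX fY (fX x) (fY y) \<noteq> (x, y)}
    \<le> (\<Sum>w\<in>T - {(x, y)}. card {(fX :: 'x \<Rightarrow> 'cx, fY :: 'y \<Rightarrow> 'cy). fX (fst w) = fX x \<and> fY (snd w) = fY y})"
proof -
  let ?C = "\<lambda>w. {(fX :: 'x \<Rightarrow> 'cx, fY :: 'y \<Rightarrow> 'cy). fX (fst w) = fX x \<and> fY (snd w) = fY y}"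
  have "{(fX, fY). bin_decoder T fX fY (fX x) (fY y) \<noteq> (x, y)} \<subseteq> (\<Union>w\<in>T - {(x, y)}. ?C w)"
    using bin_decoder_failure assms by fast
  then have "card {(fX :: 'x \<Rightarrow> 'cx, fY :: 'y \<Rightarrow> 'cy). bin_decoder T fX fY (fX x) (fY y) \<noteq> (x, y)}
      \<le> card (\<Union>w\<in>T - {(x, y)}. ?C w)"
    by (intro card_mono) simp_all
  also have "\<dots> \<le> (\<Sum>w\<in>T - {(x, y)}. card (?C w))"
    by (rule card_UN_le) simp
  finally show ?thesis .
qed

lemma card_failing_codes:
  fixes T :: "('x::finite \<times> 'y::finite) set" and e1 e2 e3 :: real
  assumes same_y: "\<And>y. real (card {w\<in>T. snd w = y}) \<le> e1 * CARD('cx::finite)"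
    and same_x: "\<And>x. real (card {w\<in>T. fst w = x}) \<le> e2 * CARD('cy::finite)"
    and card_T: "real (card T) \<le> e3 * (real CARD('cx) * real CARD('cy))"
  shows "real (card {(fX :: 'x \<Rightarrow> 'cx, fY :: 'y \<Rightarrow> 'cy). bin_decoder T fX fY (fX x) (fY y) \<noteq> (x, y)})
     \<le> real CARD(('x \<Rightarrow> 'cx) \<times> ('y \<Rightarrow> 'cy)) * (of_bool ((x, y) \<notin> T) + (e1 + e2 + e3))"
proof -
  define N where "N = real CARD(('x \<Rightarrow> 'cx) \<times> ('y \<Rightarrow> 'cy))"
  define F where "F = {(fX :: 'x \<Rightarrow> 'cx, fY :: 'y \<Rightarrow> 'cy). bin_decoder T fX fY (fX x) (fY y) \<noteq> (x, y)}"
  define C where "C w = {(fX :: 'x \<Rightarrow> 'cx, fY :: 'y \<Rightarrow> 'cy). fX (fst w) = fX x \<and> fY (snd w) = fY y}"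
    for w :: "'x \<times> 'y"
  define weight where "weight w = of_bool (snd w = y) / CARD('cx) + of_bool (fst w = x) / CARD('cy)
                                   + 1 / (real CARD('cx) * real CARD('cy))" for w :: "'x \<times> 'y"
  have "0 \<le> e1 * CARD('cx)" "0 \<le> e2 * CARD('cy)" "0 \<le> e3 * (real CARD('cx) * real CARD('cy))"
    using same_y[of y] same_x[of x] card_T of_nat_0_le_iff order_trans by blast+
  then have e_nonneg: "0 \<le> e1 + e2 + e3"
    by (simp add: zero_le_mult_iff mult_le_0_iff)
  show ?thesis
  proof (cases "(x, y) \<in> T")
    case False
    have "card F \<le> CARD(('x \<Rightarrow> 'cx) \<times> ('y \<Rightarrow> 'cy))"
      by (rule card_mono) simp_all
    then have "real (card F) \<le> N"
      unfolding N_def by (simp only: of_nat_le_iff)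
    moreover have "0 \<le> N * (e1 + e2 + e3)"
      using e_nonneg unfolding N_def by simp
    ultimately show ?thesis
      using False unfolding F_def N_def by (simp add: distrib_left)
  next
    case True
    have "real (card F) \<le> (\<Sum>w\<in>T - {(x, y)}. real (card (C w)))"
      using card_failing_codes_union_bound[OF True] unfolding F_def C_def
      by (simp only: of_nat_sum[symmetric] of_nat_le_iff)
    also have "\<dots> \<le> (\<Sum>w\<in>T - {(x, y)}. N * weight w)"
    proof (rule sum_mono)
      fix w assume "w \<in> T - {(x, y)}"
      then have "(fst w, snd w) \<noteq> (x, y)"
        by auto
      from card_colliding_codes[OF this, where 'cx='cx and 'cy='cy]
      show "real (card (C w)) \<le> N * weight w"
        unfolding C_def N_def weight_def .
    qed
    also have "\<dots> \<le> (\<Sum>w\<in>T. N * weight w)"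
      unfolding N_def weight_def by (intro sum_mono2) auto
    also have "\<dots> = N * (\<Sum>w\<in>T. weight w)"
      by (simp add: sum_distrib_left)
    also have "\<dots> \<le> N * (e1 + e2 + e3)"
    proof -
      have "(\<Sum>w\<in>T. weight w) \<le> e1 + e2 + e3"
        unfolding weight_def by (rule sum_collision_weights[OF _ _ _ same_y same_x card_T]) simp_all
      then show ?thesis
        unfolding N_def by (rule mult_left_mono) simp
    qed
    finally show ?thesis
      using True unfolding F_def N_def by simp
  qed
qed

lemma random_binning:
  fixes P :: "('x::finite \<times> 'y::finite) pmf" and e0 e1 e2 e3 :: real
  assumes outside_T: "measure_pmf.prob P (- T) \<le> e0"
    and same_y: "\<And>y. real (card {w\<in>T. snd w = y}) \<le> e1 * CARD('cx::finite)"
    and same_x: "\<And>x. real (card {w\<in>T. fst w = x}) \<le> e2 * CARD('cy::finite)"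
    and card_T: "real (card T) \<le> e3 * (real CARD('cx) * real CARD('cy))"
    and total: "e0 + e1 + e2 + e3 \<le> eps"
  shows "\<exists>(fX :: 'x \<Rightarrow> 'cx) (fY :: 'y \<Rightarrow> 'cy) g. decoding_error P fX fY g \<le> eps"
proof -
  define N where "N = real CARD(('x \<Rightarrow> 'cx) \<times> ('y \<Rightarrow> 'cy))"
  define fails where "fails c w \<longleftrightarrow> bin_decoder T (fst c) (snd c) (fst c (fst w)) (snd c (snd w)) \<noteq> w"
    for c :: "('x \<Rightarrow> 'cx) \<times> ('y \<Rightarrow> 'cy)" and w :: "'x \<times> 'y"
  define err where "err c = (\<Sum>w\<in>UNIV. pmf P w * of_bool (fails c w))" for c
  have err_eq: "err (fX, fY) = decoding_error P fX fY (bin_decoder T fX fY)" for fX fY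
    unfolding err_def decoding_error_def prob_as_sum fails_def by (simp add: case_prod_beta)
  have count: "(\<Sum>c\<in>UNIV. of_bool (fails c w)) \<le> N * (of_bool (w \<notin> T) + (e1 + e2 + e3))" for w
  proof (cases w)
    case (Pair x y)
    have "{c. fails c (x, y)} = {(fX, fY). bin_decoder T fX fY (fX x) (fY y) \<noteq> (x, y)}"
      by (auto simp: fails_def)
    then show ?thesis
      using card_failing_codes[OF same_y same_x card_T, of x y] unfolding Pair N_def by simp
  qed
  have "(\<Sum>c\<in>UNIV. err c) = (\<Sum>w\<in>UNIV. pmf P w * (\<Sum>c\<in>UNIV. of_bool (fails c w)))"
    unfolding err_def by (subst sum.swap) (simp add: sum_distrib_left mult.commute)
  also have "\<dots> \<le> (\<Sum>w\<in>UNIV. pmf P w * (N * (of_bool (w \<notin> T) + (e1 + e2 + e3))))"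
    by (intro sum_mono mult_left_mono count) simp
  also have "\<dots> = N * (\<Sum>w\<in>UNIV. pmf P w * of_bool (w \<notin> T)) + N * (e1 + e2 + e3) * (\<Sum>w\<in>UNIV. pmf P w)"
    by (simp add: ring_distribs sum.distrib sum_distrib_left mult_ac
             del: sum_mult_of_bool_eq sum_of_bool_mult_eq)
  also have "\<dots> = N * (measure_pmf.prob P (- T) + (e1 + e2 + e3))"
    by (simp add: prob_as_sum sum_pmf_eq_1 algebra_simps)
  also have "\<dots> \<le> N * eps"
    using outside_T total by (simp add: N_def)
  finally have "\<exists>c\<in>UNIV. err c \<le> eps"
    by (intro exists_le_weighted_average[where w="\<lambda>_. 1"]) (simp_all add: N_def mult_ac)
  then show ?thesis
    using err_eq by (metis surj_pair)
qed

lemma achievability: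
  fixes P :: "('x::finite \<times> 'y::finite) pmf" and d eps eps0 eps1 eps2 eps3 :: real
  assumes pos: "0 < eps1" "0 < eps2" "0 < eps3"
    and total: "eps0 + eps1 + eps2 + eps3 \<le> eps"
    and atypical: "measure_pmf.prob P (- typ_set_joint P d) \<le> eps0"
    and rate_x: "log 2 (real CARD('cx::finite)) \<ge> Xi_max P d - Xi_min (map_pmf snd P) d - log 2 eps1"
    and rate_y: "log 2 (real CARD('cy::finite)) \<ge> Xi_max P d - Xi_min (map_pmf fst P) d - log 2 eps2"
    and rate_sum: "log 2 (real CARD('cx)) + log 2 (real CARD('cy)) \<ge> Xi_max P d - log 2 eps3"
  shows "\<exists>(eX :: 'x \<Rightarrow> nat \<Rightarrow> 'cx) (eY :: 'y \<Rightarrow> nat \<Rightarrow> 'cy) U. in_Lambda P eps eX eY U"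
proof -
  define T where "T = typ_set_joint P d"
  define M where "M = Xi_max P d"
  have lower: "2 powr (- M) \<le> pmf P w" if "w \<in> T" for w
    using that unfolding T_def M_def typ_set_joint_def by (auto intro: typical_pmf_lower)
  have same_y: "real (card {w\<in>T. snd w = y}) \<le> eps1 * CARD('cx)" for y
  proof -
    have "real (card {w\<in>T. snd w = y}) \<le> 2 powr (M - Xi_min (map_pmf snd P) d)"
      using lower by (rule card_typical_fibre) (auto simp: T_def typ_set_joint_def)
    also have "\<dots> \<le> eps1 * CARD('cx)"
      using rate_x pos by (intro powr_le_of_log_ge) (auto simp: M_def)
    finally show ?thesis .
  qed
  have same_x: "real (card {w\<in>T. fst w = x}) \<le> eps2 * CARD('cy)" for x
  proof -
    have "real (card {w\<in>T. fst w = x}) \<le> 2 powr (M - Xi_min (map_pmf fst P) d)"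
      using lower by (rule card_typical_fibre) (auto simp: T_def typ_set_joint_def)
    also have "\<dots> \<le> eps2 * CARD('cy)"
      using rate_y pos by (intro powr_le_of_log_ge) (auto simp: M_def)
    finally show ?thesis .
  qed
  have "real (card T) \<le> measure_pmf.prob P T * 2 powr M"
    by (rule card_le_of_pmf_lower_bound) (simp_all add: lower)
  also have "\<dots> \<le> 2 powr M"
    by (simp add: mult_left_le_one_le)
  also have "\<dots> \<le> eps3 * (real CARD('cx) * real CARD('cy))"
    using rate_sum pos by (intro powr_le_of_log_ge) (simp_all add: M_def log_mult)
  finally have card_T: "real (card T) \<le> eps3 * (real CARD('cx) * real CARD('cy))" .
  obtain fX :: "'x \<Rightarrow> 'cx" and fY :: "'y \<Rightarrow> 'cy" and g where "decoding_error P fX fY g \<le> eps"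
    using random_binning[OF atypical[folded T_def] same_y same_x card_T total] by blast
  then show ?thesis
    by (blast intro: deterministic_code_in_Lambda)
qed

theorem theorem1:
  fixes P :: "('x::finite \<times> 'y::finite) pmf"
    and eps eps0 eps1 eps2 eps3 :: real
  assumes "eps > 0" "eps0 > 0" "eps1 > 0" "eps2 > 0" "eps3 > 0"
    and "eps0 + eps1 + eps2 + eps3 \<le> eps"
  shows "(\<forall>(eX :: 'x \<Rightarrow> nat \<Rightarrow> 'cx::finite) (eY :: 'y \<Rightarrow> nat \<Rightarrow> 'cy::finite) U.
            in_Lambda P eps eX eY U \<longrightarrow>
              log 2 (real CARD('cx)) \<ge> H0_cond_smooth P eps
            \<and> log 2 (real CARD('cy)) \<ge> H0_cond_smooth (map_pmf prod.swap P) eps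
            \<and> log 2 (real CARD('cx)) + log 2 (real CARD('cy)) \<ge> H0_smooth P eps)
       \<and> (\<forall>d::real. d \<ge> 0 \<longrightarrow>
            measure_pmf.prob P (- typ_set_joint P d) \<le> eps0 \<longrightarrow>
            log 2 (real CARD('cx)) \<ge> Xi_max P d - Xi_min (map_pmf snd P) d - log 2 eps1 \<longrightarrow>
            log 2 (real CARD('cy)) \<ge> Xi_max P d - Xi_min (map_pmf fst P) d - log 2 eps2 \<longrightarrow>
            log 2 (real CARD('cx)) + log 2 (real CARD('cy)) \<ge> Xi_max P d - log 2 eps3 \<longrightarrow>
            (\<exists>(eX :: 'x \<Rightarrow> nat \<Rightarrow> 'cx) (eY :: 'y \<Rightarrow> nat \<Rightarrow> 'cy) U. in_Lambda P eps eX eY U))"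
proof (intro conjI allI impI)
  fix eX :: "'x \<Rightarrow> nat \<Rightarrow> 'cx" and eY :: "'y \<Rightarrow> nat \<Rightarrow> 'cy" and U
  assume "in_Lambda P eps eX eY U"
  then obtain u g where code: "decoding_error P (\<lambda>x. eX x u) (\<lambda>y. eY y u) g \<le> eps"
    using in_Lambda_deterministic_code by blast
  show "log 2 (real CARD('cx)) \<ge> H0_cond_smooth P eps"
    using converse_conditional[OF code] .
  show "log 2 (real CARD('cy)) \<ge> H0_cond_smooth (map_pmf prod.swap P) eps"
    using converse_conditional_swap[OF code] .
  show "log 2 (real CARD('cx)) + log 2 (real CARD('cy)) \<ge> H0_smooth P eps"
    using converse_joint[OF code] .
next
  fix d :: real
  assume "measure_pmf.prob P (- typ_set_joint P d) \<le> eps0"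
    and "log 2 (real CARD('cx)) \<ge> Xi_max P d - Xi_min (map_pmf snd P) d - log 2 eps1"
    and "log 2 (real CARD('cy)) \<ge> Xi_max P d - Xi_min (map_pmf fst P) d - log 2 eps2"
    and "log 2 (real CARD('cx)) + log 2 (real CARD('cy)) \<ge> Xi_max P d - log 2 eps3"
  then show "\<exists>(eX :: 'x \<Rightarrow> nat \<Rightarrow> 'cx) (eY :: 'y \<Rightarrow> nat \<Rightarrow> 'cy) U. in_Lambda P eps eX eY U"
    using achievability[OF assms(3-6)] by blast
qed

end
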